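(* The group $Fr(162\times 4)$ is not isomorphic to any finite subgroup of $U(2)$; equivalently, it is not isomorphic to any finite subgroup of $SU(3)$ consisting of matrices of the block form $\begin{pmatrix}\det(M)^{-1}&0\\0&M\end{pmatrix}$ with $M\in U(2)$ (type $(B)$).
   Context: Let $\omega=e^{2i\pi/3}$, $J$ the $3\times3$ antidiagonal matrix with antidiagonal entries $1$, $G_1=\mathrm{diag}(e^{7i\pi/9},-e^{4i\pi/9},-e^{7i\pi/9})$, $G_2=\begin{pmatrix}-\tfrac12 e^{4i\pi/9}&\tfrac{1}{\sqrt2}e^{7i\pi/9}&\tfrac12 e^{4i\pi/9}\\ \tfrac{1}{\sqrt2}e^{7i\pi/9}&0&\tfrac{1}{\sqrt2}e^{7i\pi/9}\\ \tfrac12 e^{4i\pi/9}&\tfrac{1}{\sqrt2}e^{7i\pi/9}&-\tfrac12 e^{4i\pi/9}\end{pmatrix}$, $FUM=-\omega J$, and $Fr(162\times 4)=\langle G_1,G_2,FUM\rangle\subset SU(3)$. *)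

theory Defs
  imports "HOL-Analysis.Analysis" "HOL-Algebra.Generated_Groups"
begin

definition ctrans :: "complex^'n^'n \<Rightarrow> complex^'n^'n" where
  "ctrans A = (\<chi> i j. cnj (A $ j $ i))"

definition unitary_set :: "(complex^'n^'n) set" where
  "unitary_set = {A. A ** ctrans A = mat 1 \<and> ctrans A ** A = mat 1}"

definition special_unitary_set :: "(complex^'n^'n) set" where
  "special_unitary_set = {A. A \<in> unitary_set \<and> det A = 1}"

definition U_grp :: "(complex^'n^'n) monoid" where
  "U_grp = \<lparr>carrier = unitary_set, mult = (**), one = mat 1\<rparr>"

definition SU_grp :: "(complex^'n^'n) monoid" where
  "SU_grp = \<lparr>carrier = special_unitary_set, mult = (**), one = mat 1\<rparr>"

definition omega :: complex where
  "omega = exp (2 * \<i> * pi / 3)"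

definition e79 :: complex where "e79 = exp (7 * \<i> * pi / 9)"
definition e49 :: complex where "e49 = exp (4 * \<i> * pi / 9)"

definition Jmat :: "complex^3^3" where
  "Jmat = vector [vector [0, 0, 1], vector [0, 1, 0], vector [1, 0, 0]]"

definition G1 :: "complex^3^3" where
  "G1 = vector [vector [e79, 0, 0], vector [0, - e49, 0], vector [0, 0, - e79]]"

definition G2 :: "complex^3^3" where
  "G2 = vector [
     vector [- e49 / 2, e79 / complex_of_real (sqrt 2), e49 / 2],
     vector [e79 / complex_of_real (sqrt 2), 0, e79 / complex_of_real (sqrt 2)],
     vector [e49 / 2, e79 / complex_of_real (sqrt 2), - e49 / 2]]"

definition FUM :: "complex^3^3" where
  "FUM = (\<chi> i j. - omega * Jmat $ i $ j)"

definition Fr :: "(complex^3^3) set" where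
  "Fr = generate (SU_grp :: (complex^3^3) monoid) {G1, G2, FUM}"

end

theory Submission
  imports Defs
begin

text \<open>In Fr take \<open>a = G1 G2\<close>, \<open>b = G2\<^sup>3 G1\<close> and \<open>c = FUM\<^sup>2 = \<omega>\<^sup>2 I\<close>; then \<open>ab = c ba\<close> with \<open>c\<close>
  central of order 3. In \<open>GL\<^sub>2\<close> of a field, a matrix \<open>C\<close> commuting with \<open>X, Y\<close> and satisfying
  \<open>XY = C YX\<close> has \<open>C\<^sup>2 = 1\<close>: for scalar \<open>C = \<lambda>I\<close> taking determinants gives \<open>\<lambda>\<^sup>2 = 1\<close>, and
  otherwise the centralizer of \<open>C\<close> is commutative, so \<open>X, Y\<close> commute and \<open>C = 1\<close>. Hence no
  injective homomorphism maps Fr into \<open>U(2)\<close>, finite image or not.\<close>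

lemma mat2_eq_iff:
  "(A::'a^2^2) = B \<longleftrightarrow> A$1$1 = B$1$1 \<and> A$1$2 = B$1$2 \<and> A$2$1 = B$2$1 \<and> A$2$2 = B$2$2"
  by (auto simp add: vec_eq_iff forall_2)

lemma mat2_mult_nth: "((A::'a::semiring_1^2^2) ** B)$i$j = A$i$1 * B$1$j + A$i$2 * B$2$j"
  by (simp add: matrix_matrix_mult_def sum_2)

text \<open>The centralizer of a non-scalar \<open>2\<times>2\<close> matrix \<open>C\<close> is the commutative algebra \<open>k[C]\<close>.\<close>

lemma commute_mat2_if_commute_nonscalar:
  fixes C X Y :: "'a::field^2^2"
  assumes "\<not> (C$1$2 = 0 \<and> C$2$1 = 0 \<and> C$1$1 = C$2$2)"
    and "C ** X = X ** C" and "C ** Y = Y ** C"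
  shows "X ** Y = Y ** X"
  using assms unfolding mat2_eq_iff mat2_mult_nth by algebra

lemma mat_mult_commute: "(mat k :: 'a::comm_semiring_1^'n^'n) ** A = A ** mat k"
  by (simp add: vec_eq_iff matrix_matrix_mult_def mat_def if_distrib if_distribR mult.commute
      sum.delta sum.delta' cong: if_cong)

lemma mat_mult_nth: "((mat k :: 'a::semiring_1^'n^'n) ** A) $ i $ j = k * A $ i $ j"
  by (simp add: matrix_matrix_mult_def mat_def if_distrib if_distribR sum.delta cong: if_cong)

lemma central_commutator_square_mat2:
  fixes C X Y :: "'a::field^2^2"
  assumes det_X: "det X \<noteq> 0" and det_Y: "det Y \<noteq> 0"
    and commutator: "X ** Y = C ** (Y ** X)"
    and "C ** X = X ** C" and "C ** Y = Y ** C"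
  shows "C ** C = mat 1"
proof (cases "C$1$2 = 0 \<and> C$2$1 = 0 \<and> C$1$1 = C$2$2")
  case True
  have "det X * det Y = det C * (det X * det Y)"
    using arg_cong[OF commutator, of det] by (simp add: det_mul mult.commute)
  then have "det C = 1"
    using det_X det_Y by simp
  then show ?thesis
    using True by (simp add: det_2 mat2_eq_iff mat2_mult_nth mat_def)
next
  case False
  then have "X ** Y = Y ** X"
    using commute_mat2_if_commute_nonscalar assms(4,5) by blast
  moreover obtain Z where Z: "(Y ** X) ** Z = mat 1"
    using det_X det_Y invertible_det_nz[of "Y ** X"] unfolding invertible_def
    by (auto simp: det_mul)
  ultimately have "C ** mat 1 = mat 1"
    using commutator by (metis matrix_mul_assoc matrix_mul_lid)
  then show ?thesis
    by simp
qed

lemma central_commutator_square_of_embedding_mat2: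
  fixes \<phi> :: "'b::semiring_1^'n^'n \<Rightarrow> 'a::field^2^2"
  assumes closed: "\<And>x y. x \<in> S \<Longrightarrow> y \<in> S \<Longrightarrow> x ** y \<in> S"
    and hom: "\<And>x y. x \<in> S \<Longrightarrow> y \<in> S \<Longrightarrow> \<phi> (x ** y) = \<phi> x ** \<phi> y"
    and inj: "inj_on \<phi> S"
    and det: "\<And>x. x \<in> S \<Longrightarrow> det (\<phi> x) \<noteq> 0"
    and S: "a \<in> S" "b \<in> S" "c \<in> S" "x \<in> S"
    and commutator: "a ** b = c ** (b ** a)"
    and central: "c ** a = a ** c" "c ** b = b ** c"
  shows "c ** (c ** x) = x"
proof -
  have "\<phi> a ** \<phi> b = \<phi> c ** (\<phi> b ** \<phi> a)"
    using arg_cong[OF commutator, of \<phi>] S by (simp add: hom closed)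
  moreover have "\<phi> c ** \<phi> a = \<phi> a ** \<phi> c" "\<phi> c ** \<phi> b = \<phi> b ** \<phi> c"
    using arg_cong[OF central(1), of \<phi>] arg_cong[OF central(2), of \<phi>] S by (simp_all add: hom)
  ultimately have "\<phi> c ** \<phi> c = mat 1"
    using central_commutator_square_mat2 det S by blast
  then have "\<phi> (c ** (c ** x)) = \<phi> x"
    using S by (simp add: hom closed matrix_mul_assoc)
  then show ?thesis
    using inj S by (simp add: inj_on_def closed)
qed

definition M3 :: "'a::zero \<Rightarrow> 'a \<Rightarrow> 'a \<Rightarrow> 'a \<Rightarrow> 'a \<Rightarrow> 'a \<Rightarrow> 'a \<Rightarrow> 'a \<Rightarrow> 'a \<Rightarrow> 'a^3^3" where
  "M3 a b c d e f g h k = vector [vector [a, b, c], vector [d, e, f], vector [g, h, k]]"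

lemma M3_eq_iff:
  "M3 a b c d e f g h k = M3 a' b' c' d' e' f' g' h' k' \<longleftrightarrow>
   a = a' \<and> b = b' \<and> c = c' \<and> d = d' \<and> e = e' \<and> f = f' \<and> g = g' \<and> h = h' \<and> k = k'"
  by (auto simp: M3_def vec_eq_iff forall_3)

lemma M3_mult:
  "M3 a b c d e f g h k ** M3 a' b' c' d' e' f' g' h' k' =
   M3 (a*a' + b*d' + c*g') (a*b' + b*e' + c*h') (a*c' + b*f' + c*k')
      (d*a' + e*d' + f*g') (d*b' + e*e' + f*h') (d*c' + e*f' + f*k')
      (g*a' + h*d' + k*g') (g*b' + h*e' + k*h') (g*c' + h*f' + k*k')"
  by (simp add: M3_def vec_eq_iff forall_3 matrix_matrix_mult_def sum_3)

lemma mat_eq_M3: "mat k = M3 k 0 0 0 k 0 0 0 k"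
  by (simp add: M3_def mat_def vec_eq_iff forall_3)

text \<open>Here \<open>z\<close> stands for \<open>e\<^bsup>i\<pi>/9\<^esup>\<close>, a root of the 18th cyclotomic polynomial, and \<open>s\<close> for
  \<open>1/\<surd>2\<close>; \<open>X\<close> and \<open>Y\<close> are then \<open>G1\<close> and \<open>G2\<close>. The two intermediate normal forms keep the
  Gr\<ouml>bner basis computations small.\<close>

lemma M3_commutator_relation:
  fixes z s :: "'a::idom"
  assumes z: "z ^ 6 = z ^ 3 - 1" and s: "2 * s ^ 2 = 1"
  defines "X \<equiv> M3 (z^7) 0 0 0 (- (z^4)) 0 0 0 (- (z^7))"
    and "Y \<equiv> M3 (- (z^4 * s^2)) (z^7 * s) (z^4 * s^2)
                  (z^7 * s) 0 (z^7 * s)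
                  (z^4 * s^2) (z^7 * s) (- (z^4 * s^2))"
  shows "(X ** Y) ** (Y ** (Y ** (Y ** X))) = mat (z ^ 12) ** ((Y ** (Y ** (Y ** X))) ** (X ** Y))"
proof -
  have a: "X ** Y = M3 (z^2 * s^2) (- (z^5 * s)) (- (z^2 * s^2))
                        (z^2 * s) 0 (z^2 * s)
                        (z^2 * s^2) (z^5 * s) (- (z^2 * s^2))"
    unfolding X_def Y_def M3_mult M3_eq_iff
    by (intro conjI; ((simp; fail) | (insert z s, algebra)))
  have b: "Y ** (Y ** (Y ** X)) = M3 (- (z * s^2)) ((z - z^4) * s) (- (z * s^2))
                                      (- (z * s)) 0 (z * s)
                                      (z * s^2) ((z - z^4) * s) (z * s^2)"
    unfolding X_def Y_def M3_mult M3_eq_iff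
    by (intro conjI; ((simp; fail) | (insert z s, algebra)))
  show ?thesis
    unfolding a b mat_eq_M3 M3_mult M3_eq_iff
    by (intro conjI; ((simp; fail) | (insert z s, algebra)))
qed

definition zeta :: complex where
  "zeta = exp (\<i> * pi / 9)"

lemma zeta_power: "zeta ^ n = exp (of_nat n * (\<i> * pi / 9))"
  by (simp add: zeta_def exp_of_nat_mult[symmetric] algebra_simps)

lemma e79_eq_zeta: "e79 = zeta ^ 7"
  by (simp add: zeta_power e79_def algebra_simps)

lemma e49_eq_zeta: "e49 = zeta ^ 4"
  by (simp add: zeta_power e49_def algebra_simps)

lemma omega_eq_zeta: "omega = zeta ^ 6"
  by (simp add: zeta_power omega_def algebra_simps)

lemma zeta_cube: "zeta ^ 3 = Complex (1/2) (sqrt 3 / 2)"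
proof -
  have "zeta ^ 3 = cis (pi / 3)"
    by (simp add: zeta_power cis_conv_exp algebra_simps)
  then show ?thesis
    by (simp add: complex_eq_iff cos_60 sin_60)
qed

lemma zeta_cyclotomic: "zeta ^ 6 = zeta ^ 3 - 1"
  using power_add[of zeta 3 3] by (simp add: zeta_cube complex_eq_iff)

lemma omega_pow4_ne_1: "omega ^ 4 \<noteq> 1"
proof -
  have "omega ^ 3 = exp (2 * of_real pi * \<i>)"
    by (simp add: omega_def exp_of_nat_mult[symmetric] algebra_simps)
  then have "omega ^ 3 = 1"
    by simp
  then have "omega ^ 4 = omega"
    by (simp add: power_Suc2[of omega 3, simplified])
  then show ?thesis
    by (simp add: omega_eq_zeta zeta_cyclotomic zeta_cube complex_eq_iff)
qed

lemma Fr_commutator_relation: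
  "(G1 ** G2) ** (G2 ** (G2 ** (G2 ** G1))) =
   mat (omega ^ 2) ** ((G2 ** (G2 ** (G2 ** G1))) ** (G1 ** G2))"
proof -
  define s :: complex where "s = 1 / of_real (sqrt 2)"
  have s: "2 * s ^ 2 = 1"
    by (simp add: s_def power_divide flip: of_real_power)
  have "G1 = M3 (zeta^7) 0 0 0 (- (zeta^4)) 0 0 0 (- (zeta^7))"
    by (simp add: G1_def M3_def e79_eq_zeta e49_eq_zeta)
  moreover have "G2 = M3 (- (zeta^4 * s^2)) (zeta^7 * s) (zeta^4 * s^2)
                         (zeta^7 * s) 0 (zeta^7 * s)
                         (zeta^4 * s^2) (zeta^7 * s) (- (zeta^4 * s^2))"
    using s by (simp add: G2_def M3_def e79_eq_zeta e49_eq_zeta s_def field_simps)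
  moreover have "omega ^ 2 = zeta ^ 12"
    by (simp add: omega_eq_zeta flip: power_mult)
  ultimately show ?thesis
    using M3_commutator_relation[OF zeta_cyclotomic s] by simp
qed

lemma FUM_square: "FUM ** FUM = mat (omega ^ 2)"
  by (simp add: FUM_def Jmat_def mat_eq_M3 M3_def vec_eq_iff forall_3 matrix_matrix_mult_def
      sum_3 power2_eq_square)

lemma mat_omega_square_twice_ne_G1: "mat (omega ^ 2) ** (mat (omega ^ 2) ** G1) \<noteq> G1"
proof
  assume "mat (omega ^ 2) ** (mat (omega ^ 2) ** G1) = G1"
  then have "omega ^ 2 * (omega ^ 2 * G1 $ 1 $ 1) = G1 $ 1 $ 1"
    by (metis mat_mult_nth)
  then have "omega ^ 4 * e79 = 1 * e79"
    by (simp add: G1_def mult.assoc flip: power_add)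
  then show False
    using omega_pow4_ne_1 by (simp add: e79_def)
qed

lemma Fr_mult_closed: "x \<in> Fr \<Longrightarrow> y \<in> Fr \<Longrightarrow> x ** y \<in> Fr"
  using generate.eng[of x SU_grp "{G1, G2, FUM}" y] by (simp add: Fr_def SU_grp_def)

lemma generators_in_Fr: "G1 \<in> Fr" "G2 \<in> Fr" "FUM \<in> Fr"
  unfolding Fr_def by (auto intro: generate.incl)

lemma unitary_det_nonzero:
  assumes "A \<in> unitary_set"
  shows "det A \<noteq> 0"
proof
  assume "det A = 0"
  moreover have "det (A ** ctrans A) = 1"
    using assms by (simp add: unitary_set_def)
  ultimately show False
    by (simp add: det_mul)
qed

theorem theorem12:
  shows "\<not> (\<exists>H. subgroup H (U_grp :: (complex^2^2) monoid) \<and> finite H \<and>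
            (SU_grp :: (complex^3^3) monoid)\<lparr>carrier := Fr\<rparr> \<cong> (U_grp :: (complex^2^2) monoid)\<lparr>carrier := H\<rparr>)"
proof
  assume "\<exists>H. subgroup H (U_grp :: (complex^2^2) monoid) \<and> finite H \<and>
            (SU_grp :: (complex^3^3) monoid)\<lparr>carrier := Fr\<rparr> \<cong> (U_grp :: (complex^2^2) monoid)\<lparr>carrier := H\<rparr>"
  then obtain H and \<phi> :: "complex^3^3 \<Rightarrow> complex^2^2"
    where sub: "subgroup H U_grp"
      and \<phi>: "\<phi> \<in> iso (SU_grp\<lparr>carrier := Fr\<rparr>) (U_grp\<lparr>carrier := H\<rparr>)"
    unfolding is_iso_def by blast
  have H_unitary: "H \<subseteq> unitary_set"
    using subgroup.subset[OF sub] by (simp add: U_grp_def)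
  define a where "a = G1 ** G2"
  define b where "b = G2 ** (G2 ** (G2 ** G1))"
  have in_Fr: "a \<in> Fr" "b \<in> Fr" "FUM ** FUM \<in> Fr"
    unfolding a_def b_def by (auto intro!: Fr_mult_closed generators_in_Fr)
  have "FUM ** FUM ** (FUM ** FUM ** G1) = G1"
  proof (rule central_commutator_square_of_embedding_mat2[where S = Fr and \<phi> = \<phi>])
    show "\<phi> (x ** y) = \<phi> x ** \<phi> y" if "x \<in> Fr" "y \<in> Fr" for x y
      using \<phi> that by (auto simp: iso_def hom_def SU_grp_def U_grp_def)
    show "det (\<phi> x) \<noteq> 0" if "x \<in> Fr" for x
      using \<phi> that H_unitary unitary_det_nonzero by (auto simp: iso_def hom_def U_grp_def Pi_iff)
    show "a ** b = FUM ** FUM ** (b ** a)"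
      unfolding a_def b_def FUM_square by (rule Fr_commutator_relation)
    show "FUM ** FUM ** a = a ** (FUM ** FUM)" "FUM ** FUM ** b = b ** (FUM ** FUM)"
      unfolding FUM_square by (rule mat_mult_commute)+
  qed (use \<phi> in_Fr generators_in_Fr in \<open>auto simp: iso_def bij_betw_def intro: Fr_mult_closed\<close>)
  then show False
    using mat_omega_square_twice_ne_G1 by (simp add: FUM_square)
qed

end
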